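(* Let $d \geq 2$. Then: (1) for all integers $s_1, \ldots, s_k \geq 1$, $$\frac{s_1}{s_1+\ldots+s_k}\mathsf U_{d,s_1}+\ldots+\frac{s_k}{s_1+\ldots+s_k}\mathsf U_{d,s_k}\subseteq \mathsf U_{d,s_1+\ldots+s_k};$$ (2) for all integers $s, n \geq 1$, $\mathsf U_{d,s} \subseteq \mathsf U_{d,ns}$; (3) for all integers $s,t \geq 1$, $\mathsf U_{d,s}\cap \mathsf U_{d,t} \subseteq \mathsf U_{d,s+t}$.
   Context: For integers $d\ge 2$, $s\ge 1$, a matrix $U\in\mathcal U(ds)$ (unitary $ds\times ds$ complex matrices) is viewed as a $d\times d$ block matrix with blocks $U_{ij}\in M_s(\mathbb C)$. Define $\phi_{d,s}(U)=\big(\tfrac1s\|U_{ij}\|_F^2\big)_{i,j=1}^d$, where $\|X\|_F=\operatorname{Tr}(XX^* )^{1/2}$, and $\mathsf U_{d,s}:=\phi_{d,s}(\mathcal U(ds))$. Sums of sets are Minkowski sums. *)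

theory Defs
  imports Complex_Main "Jordan_Normal_Form.Matrix"
begin

definition adj_mat :: "complex mat \<Rightarrow> complex mat" where
  "adj_mat U = mat (dim_col U) (dim_row U) (\<lambda>(i,j). cnj (U $$ (j,i)))"

definition unitary_group :: "nat \<Rightarrow> complex mat set" where
  "unitary_group n = {U. U \<in> carrier_mat n n \<and> U * adj_mat U = 1\<^sub>m n \<and> adj_mat U * U = 1\<^sub>m n}"

text \<open>The (i,j) block (of size s x s) of a ds x ds matrix, and the squared Frobenius norm Tr(XX^*) written out as the sum of squared moduli of entries.\<close>
definition block_mat :: "nat \<Rightarrow> complex mat \<Rightarrow> nat \<Rightarrow> nat \<Rightarrow> complex mat" where
  "block_mat s U i j = mat s s (\<lambda>(a,b). U $$ (i*s + a, j*s + b))"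

definition frob_norm_sq :: "complex mat \<Rightarrow> real" where
  "frob_norm_sq X = (\<Sum>a<dim_row X. \<Sum>b<dim_col X. (cmod (X $$ (a,b)))\<^sup>2)"

definition phi :: "nat \<Rightarrow> nat \<Rightarrow> complex mat \<Rightarrow> real mat" where
  "phi d s U = mat d d (\<lambda>(i,j). frob_norm_sq (block_mat s U i j) / real s)"

definition Uset :: "nat \<Rightarrow> nat \<Rightarrow> real mat set" where
  "Uset d s = phi d s ` unitary_group (d*s)"

definition wsum_sets :: "nat \<Rightarrow> nat \<Rightarrow> (nat \<Rightarrow> real) \<Rightarrow> (nat \<Rightarrow> real mat set) \<Rightarrow> real mat set" where
  "wsum_sets d k c A = {mat d d (\<lambda>ij. \<Sum>l<k. c l * X l $$ ij) | X. \<forall>l<k. X l \<in> A l}"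

end

theory Submission
  imports Defs
begin

text \<open>
  Given \<open>U \<in> U(ds)\<close> and \<open>V \<in> U(dt)\<close>, conjugating the direct sum \<open>U \<oplus> V\<close> by a
  permutation of the indices gives \<open>W \<in> U(d(s+t))\<close> whose \<open>(i,j)\<close> block of size \<open>s + t\<close>
  is \<open>U\<^sub>i\<^sub>j \<oplus> V\<^sub>i\<^sub>j\<close>. Hence \<open>\<parallel>W\<^sub>i\<^sub>j\<parallel>\<^sup>2 = \<parallel>U\<^sub>i\<^sub>j\<parallel>\<^sup>2 + \<parallel>V\<^sub>i\<^sub>j\<parallel>\<^sup>2\<close>, that is
  \<open>(s + t) \<phi>(W) = s \<phi>(U) + t \<phi>(V)\<close>. Induction on the number of summands gives (1), and
  (2), (3) are the instances of (1) in which all summands are the same point.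
\<close>

lemma sum_lessThan_add_nat:
  "(\<Sum>c<p + q. f c) = (\<Sum>c<p. f c) + (\<Sum>c<q. f (p + c))"
  for f :: "nat \<Rightarrow> 'a::comm_monoid_add"
  by (induction q) (simp_all add: add.assoc)

lemma mult_add_less_mult:
  fixes i a d m :: nat
  assumes "i < d" "a < m"
  shows "i * m + a < d * m"
proof -
  have "i * m + a < Suc i * m" using assms(2) by simp
  also have "\<dots> \<le> d * m" using assms(1) by (intro mult_right_mono) auto
  finally show ?thesis .
qed

lemma mult_add_eq_mult_add_iff:
  fixes i i' a a' m :: nat
  assumes "a < m" "a' < m"
  shows "i * m + a = i' * m + a' \<longleftrightarrow> i = i' \<and> a = a'"
  using assms
  by (metis add.commute div_mult_self1 div_less mod_mult_self1 mod_less plus_nat.add_0 gr_implies_not0)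

lemma less_add_cases:
  fixes a s t :: nat
  assumes "a < s + t"
  obtains (left) "a < s" | (right) b where "a = s + b" "b < t"
  using assms by (metis add_less_cancel_left le_Suc_ex not_less)

lemma less_mult_add_cases:
  fixes r d s t :: nat
  assumes "r < d * (s + t)"
  obtains (left) i a where "r = i * (s + t) + a" "i < d" "a < s"
    | (right) i b where "r = i * (s + t) + (s + b)" "i < d" "b < t"
proof -
  have "s + t > 0" using assms by (cases "s + t") auto
  then have r: "r = r div (s + t) * (s + t) + r mod (s + t)" "r div (s + t) < d"
      "r mod (s + t) < s + t"
    using assms by (simp_all only: div_mult_mod_eq less_mult_imp_div_less mod_less_divisor)
  from r(3) show ?thesis
  proof (cases rule: less_add_cases)
    case left
    with r(1,2) show ?thesis by (rule that(1))
  next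
    case (right b)
    with r(1,2) show ?thesis by (intro that(2)) simp_all
  qed
qed

lemma adj_mat_dim [simp]:
  "dim_row (adj_mat A) = dim_col A" "dim_col (adj_mat A) = dim_row A"
  by (simp_all add: adj_mat_def)

lemma adj_mat_carrier_mat: "A \<in> carrier_mat m n \<Longrightarrow> adj_mat A \<in> carrier_mat n m"
  by (metis adj_mat_dim carrier_matD carrier_matI)

lemma index_adj_mat [simp]:
  "i < dim_col A \<Longrightarrow> j < dim_row A \<Longrightarrow> adj_mat A $$ (i, j) = cnj (A $$ (j, i))"
  by (simp add: adj_mat_def)

lemma adj_mat_zero_mat [simp]: "adj_mat (0\<^sub>m m n) = 0\<^sub>m n m"
  by (rule eq_matI) auto

lemma adj_mat_four_block_mat:
  assumes "A \<in> carrier_mat m n" "B \<in> carrier_mat m n'" "C \<in> carrier_mat m' n" "D \<in> carrier_mat m' n'"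
  shows "adj_mat (four_block_mat A B C D)
    = four_block_mat (adj_mat A) (adj_mat C) (adj_mat B) (adj_mat D)"
  by (rule eq_matI) (use assms in auto)

lemma unitary_group_carrier_mat: "U \<in> unitary_group n \<Longrightarrow> U \<in> carrier_mat n n"
  by (simp add: unitary_group_def)

lemma mult_four_block_diag_mat:
  assumes "A \<in> carrier_mat p p" "B \<in> carrier_mat q q" "A' \<in> carrier_mat p p" "B' \<in> carrier_mat q q"
  shows "four_block_mat A (0\<^sub>m p q) (0\<^sub>m q p) B * four_block_mat A' (0\<^sub>m p q) (0\<^sub>m q p) B'
    = four_block_mat (A * A') (0\<^sub>m p q) (0\<^sub>m q p) (B * B')"
  using assms by (simp add: mult_four_block_mat[OF assms(1) zero_carrier_mat zero_carrier_mat assms(2)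
      assms(3) zero_carrier_mat zero_carrier_mat assms(4)])

lemma four_block_mat_unitary:
  assumes U: "U \<in> unitary_group p" and V: "V \<in> unitary_group q"
  shows "four_block_mat U (0\<^sub>m p q) (0\<^sub>m q p) V \<in> unitary_group (p + q)"
proof -
  have UV: "U \<in> carrier_mat p p" "V \<in> carrier_mat q q"
    using U V by (simp_all add: unitary_group_carrier_mat)
  have adjUV: "adj_mat U \<in> carrier_mat p p" "adj_mat V \<in> carrier_mat q q"
    using UV by (simp_all add: adj_mat_carrier_mat)
  have adj: "adj_mat (four_block_mat U (0\<^sub>m p q) (0\<^sub>m q p) V)
      = four_block_mat (adj_mat U) (0\<^sub>m p q) (0\<^sub>m q p) (adj_mat V)"
    using adj_mat_four_block_mat[of U p p "0\<^sub>m p q" q "0\<^sub>m q p" q V] UV by simp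
  have inv: "U * adj_mat U = 1\<^sub>m p" "adj_mat U * U = 1\<^sub>m p"
    "V * adj_mat V = 1\<^sub>m q" "adj_mat V * V = 1\<^sub>m q"
    using U V by (simp_all add: unitary_group_def)
  show ?thesis
    unfolding unitary_group_def mem_Collect_eq adj
      mult_four_block_diag_mat[OF UV adjUV] mult_four_block_diag_mat[OF adjUV UV] inv
    by (intro conjI four_block_carrier_mat[OF UV] four_block_one_mat)
qed

definition permute_mat :: "nat \<Rightarrow> (nat \<Rightarrow> nat) \<Rightarrow> 'a mat \<Rightarrow> 'a mat" where
  "permute_mat n \<sigma> A = mat n n (\<lambda>(r, c). A $$ (\<sigma> r, \<sigma> c))"

lemma permute_mat_carrier_mat [simp]: "permute_mat n \<sigma> A \<in> carrier_mat n n"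
  by (simp add: permute_mat_def)

lemma permute_mat_mult:
  fixes A B :: "'a::comm_semiring_0 mat"
  assumes \<sigma>: "bij_betw \<sigma> {..<n} {..<n}" and "A \<in> carrier_mat n n" "B \<in> carrier_mat n n"
  shows "permute_mat n \<sigma> A * permute_mat n \<sigma> B = permute_mat n \<sigma> (A * B)"
proof (rule eq_matI)
  fix r c assume "r < dim_row (permute_mat n \<sigma> (A * B))" "c < dim_col (permute_mat n \<sigma> (A * B))"
  then have rc: "r < n" "c < n" by (simp_all add: permute_mat_def)
  have "\<sigma> r < n" "\<sigma> c < n" using \<sigma> rc by (auto simp: bij_betw_def)
  then have "(A * B) $$ (\<sigma> r, \<sigma> c) = (\<Sum>k<n. A $$ (\<sigma> r, k) * B $$ (k, \<sigma> c))"
    using assms by (simp add: scalar_prod_def lessThan_atLeast0)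
  also have "\<dots> = (\<Sum>k<n. A $$ (\<sigma> r, \<sigma> k) * B $$ (\<sigma> k, \<sigma> c))"
    using sum.reindex_bij_betw[OF \<sigma>, of "\<lambda>k. A $$ (\<sigma> r, k) * B $$ (k, \<sigma> c)"] by simp
  finally show "(permute_mat n \<sigma> A * permute_mat n \<sigma> B) $$ (r, c) = permute_mat n \<sigma> (A * B) $$ (r, c)"
    using rc by (simp add: permute_mat_def scalar_prod_def lessThan_atLeast0)
qed (simp_all add: permute_mat_def)

lemma permute_mat_one:
  assumes "bij_betw \<sigma> {..<n} {..<n}"
  shows "permute_mat n \<sigma> (1\<^sub>m n) = 1\<^sub>m n"
proof -
  have "\<sigma> r < n" "\<sigma> r = \<sigma> c \<longleftrightarrow> r = c" if "r < n" "c < n" for r c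
    using assms that by (auto simp: bij_betw_def inj_on_def)
  then show ?thesis
    by (intro eq_matI) (auto simp: permute_mat_def)
qed

lemma adj_mat_permute_mat:
  assumes "bij_betw \<sigma> {..<n} {..<n}" "A \<in> carrier_mat n n"
  shows "adj_mat (permute_mat n \<sigma> A) = permute_mat n \<sigma> (adj_mat A)"
proof -
  have "\<sigma> r < n" if "r < n" for r
    using assms that by (auto simp: bij_betw_def)
  then show ?thesis
    using assms(2) by (intro eq_matI) (auto simp: permute_mat_def)
qed

lemma permute_mat_unitary:
  assumes \<sigma>: "bij_betw \<sigma> {..<n} {..<n}" and U: "U \<in> unitary_group n"
  shows "permute_mat n \<sigma> U \<in> unitary_group n"
proof -
  have carr: "U \<in> carrier_mat n n" "adj_mat U \<in> carrier_mat n n"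
    using U by (simp_all add: unitary_group_carrier_mat adj_mat_carrier_mat)
  have inv: "U * adj_mat U = 1\<^sub>m n" "adj_mat U * U = 1\<^sub>m n"
    using U by (simp_all add: unitary_group_def)
  show ?thesis
    unfolding unitary_group_def mem_Collect_eq adj_mat_permute_mat[OF \<sigma> carr(1)]
      permute_mat_mult[OF \<sigma> carr] permute_mat_mult[OF \<sigma> carr(2,1)] inv permute_mat_one[OF \<sigma>]
    by (intro conjI permute_mat_carrier_mat refl)
qed

text \<open>
  Row \<open>i (s + t) + a\<close> of a \<open>d(s+t) \<times> d(s+t)\<close> matrix, i.e. row \<open>a\<close> of block row \<open>i\<close>, is
  sent to row \<open>a\<close> of block row \<open>i\<close> of \<open>U\<close> if \<open>a < s\<close>, and to row \<open>a - s\<close> of block row \<open>i\<close>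
  of \<open>V\<close> otherwise, where \<open>U\<close> and \<open>V\<close> are the diagonal blocks of \<open>U \<oplus> V\<close>.
\<close>
definition interleave_index :: "nat \<Rightarrow> nat \<Rightarrow> nat \<Rightarrow> nat \<Rightarrow> nat" where
  "interleave_index d s t r =
    (if r mod (s + t) < s then r div (s + t) * s + r mod (s + t)
     else d * s + (r div (s + t) * t + (r mod (s + t) - s)))"

lemma interleave_index_left:
  "a < s \<Longrightarrow> interleave_index d s t (i * (s + t) + a) = i * s + a"
  by (simp add: interleave_index_def)

lemma interleave_index_right:
  "b < t \<Longrightarrow> interleave_index d s t (i * (s + t) + (s + b)) = d * s + (i * t + b)"
  by (simp add: interleave_index_def)

lemma interleave_index_less:
  assumes "r < d * (s + t)"
  shows "interleave_index d s t r < d * (s + t)"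
  using assms
proof (cases rule: less_mult_add_cases)
  case (left i a)
  then show ?thesis
    unfolding left(1) interleave_index_left[OF left(3)]
    using mult_add_less_mult[of i d a s] by (simp add: distrib_left)
next
  case (right i b)
  then show ?thesis
    unfolding right(1) interleave_index_right[OF right(3)]
    using mult_add_less_mult[of i d b t] by (simp add: distrib_left)
qed

lemma inj_on_interleave_index: "inj_on (interleave_index d s t) {..<d * (s + t)}"
proof (rule inj_onI)
  fix r r' assume r: "r \<in> {..<d * (s + t)}" and r': "r' \<in> {..<d * (s + t)}"
    and eq: "interleave_index d s t r = interleave_index d s t r'"
  from r show "r = r'"
    unfolding lessThan_iff
  proof (cases rule: less_mult_add_cases)
    case (left i a)
    from r' show ?thesis
      unfolding lessThan_iff
    proof (cases rule: less_mult_add_cases)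
      case (left i' a')
      with \<open>r = i * (s + t) + a\<close> \<open>a < s\<close> eq show ?thesis
        by (simp add: interleave_index_left mult_add_eq_mult_add_iff)
    next
      case (right i' b')
      with left eq mult_add_less_mult[of i d a s] show ?thesis
        by (simp add: interleave_index_left interleave_index_right)
    qed
  next
    case (right i b)
    from r' show ?thesis
      unfolding lessThan_iff
    proof (cases rule: less_mult_add_cases)
      case (left i' a')
      with right eq mult_add_less_mult[of i' d a' s] show ?thesis
        by (simp add: interleave_index_left interleave_index_right)
    next
      case (right i' b')
      with \<open>r = i * (s + t) + (s + b)\<close> \<open>b < t\<close> eq show ?thesis
        by (simp add: interleave_index_right mult_add_eq_mult_add_iff)
    qed
  qed
qed

lemma interleave_index_bij:
  "bij_betw (interleave_index d s t) {..<d * (s + t)} {..<d * (s + t)}"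
  using interleave_index_less inj_on_interleave_index
  by (intro bij_betw_imageI endo_inj_surj) auto

definition blockwise_direct_sum :: "nat \<Rightarrow> nat \<Rightarrow> nat \<Rightarrow> complex mat \<Rightarrow> complex mat \<Rightarrow> complex mat"
  where "blockwise_direct_sum d s t U V = permute_mat (d * (s + t)) (interleave_index d s t)
     (four_block_mat U (0\<^sub>m (d * s) (d * t)) (0\<^sub>m (d * t) (d * s)) V)"

lemma blockwise_direct_sum_unitary:
  assumes "U \<in> unitary_group (d * s)" "V \<in> unitary_group (d * t)"
  shows "blockwise_direct_sum d s t U V \<in> unitary_group (d * (s + t))"
  unfolding blockwise_direct_sum_def
  using four_block_mat_unitary[OF assms]
  by (intro permute_mat_unitary interleave_index_bij) (simp add: distrib_left)

lemma block_mat_carrier_mat: "block_mat s U i j \<in> carrier_mat s s"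
  by (simp add: block_mat_def)

lemma block_mat_blockwise_direct_sum:
  assumes "i < d" "j < d" "U \<in> carrier_mat (d * s) (d * s)" "V \<in> carrier_mat (d * t) (d * t)"
  shows "block_mat (s + t) (blockwise_direct_sum d s t U V) i j
    = four_block_mat (block_mat s U i j) (0\<^sub>m s t) (0\<^sub>m t s) (block_mat t V i j)"
    (is "?lhs = ?rhs")
proof (rule eq_matI)
  fix a b assume "a < dim_row ?rhs" "b < dim_col ?rhs"
  then have ab: "a < s + t" "b < s + t" by (simp_all add: block_mat_def)
  have "i * (s + t) + a < d * (s + t)" "j * (s + t) + b < d * (s + t)"
    using ab assms(1,2) by (simp_all add: mult_add_less_mult)
  then have "?lhs $$ (a, b) = four_block_mat U (0\<^sub>m (d * s) (d * t)) (0\<^sub>m (d * t) (d * s)) V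
      $$ (interleave_index d s t (i * (s + t) + a), interleave_index d s t (j * (s + t) + b))"
    using ab by (simp add: block_mat_def blockwise_direct_sum_def permute_mat_def)
  also have "\<dots> = ?rhs $$ (a, b)"
    using ab(1)
  proof (cases rule: less_add_cases)
    case left
    with ab(2) assms show ?thesis
      by (cases rule: less_add_cases) (simp_all add: interleave_index_left interleave_index_right
          block_mat_def mult_add_less_mult trans_less_add1)
  next
    case (right a')
    with ab(2) assms show ?thesis
      by (cases rule: less_add_cases) (simp_all add: interleave_index_left interleave_index_right
          block_mat_def mult_add_less_mult trans_less_add1)
  qed
  finally show "?lhs $$ (a, b) = ?rhs $$ (a, b)" .
qed (simp_all add: block_mat_def)

lemma frob_norm_sq_four_block_diag_mat:
  assumes "A \<in> carrier_mat m n" "B \<in> carrier_mat m' n'"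
  shows "frob_norm_sq (four_block_mat A (0\<^sub>m m n') (0\<^sub>m m' n) B) = frob_norm_sq A + frob_norm_sq B"
  using assms by (simp add: frob_norm_sq_def sum_lessThan_add_nat sum.distrib)

lemma phi_index:
  "i < d \<Longrightarrow> j < d \<Longrightarrow> phi d s U $$ (i, j) = frob_norm_sq (block_mat s U i j) / real s"
  by (simp add: phi_def)

lemma Uset_carrier_mat: "X \<in> Uset d s \<Longrightarrow> X \<in> carrier_mat d d"
  by (auto simp: Uset_def phi_def)

lemma Uset_add:
  assumes "0 < s" "0 < t" "Y \<in> Uset d s" "Z \<in> Uset d t"
  shows "\<exists>W \<in> Uset d (s + t). \<forall>i<d. \<forall>j<d.
    real (s + t) * W $$ (i, j) = real s * Y $$ (i, j) + real t * Z $$ (i, j)"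
proof -
  obtain U V where U: "U \<in> unitary_group (d * s)" "Y = phi d s U"
    and V: "V \<in> unitary_group (d * t)" "Z = phi d t V"
    using assms(3,4) by (auto simp: Uset_def)
  let ?W = "blockwise_direct_sum d s t U V"
  have "real (s + t) * phi d (s + t) ?W $$ (i, j) = real s * Y $$ (i, j) + real t * Z $$ (i, j)"
    if "i < d" "j < d" for i j
  proof -
    have "frob_norm_sq (block_mat (s + t) ?W i j)
        = frob_norm_sq (block_mat s U i j) + frob_norm_sq (block_mat t V i j)"
      using that U(1) V(1)
      by (simp add: block_mat_blockwise_direct_sum unitary_group_carrier_mat
          frob_norm_sq_four_block_diag_mat block_mat_carrier_mat)
    then show ?thesis
      using that assms(1,2) by (simp add: phi_index U(2) V(2) del: of_nat_add)
  qed
  moreover have "phi d (s + t) ?W \<in> Uset d (s + t)"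
    unfolding Uset_def using blockwise_direct_sum_unitary[OF U(1) V(1)] by blast
  ultimately show ?thesis by blast
qed

lemma Uset_sum:
  "0 < k \<Longrightarrow> \<forall>l<k. 0 < s l \<Longrightarrow> \<forall>l<k. X l \<in> Uset d (s l) \<Longrightarrow>
    \<exists>Y \<in> Uset d (\<Sum>l<k. s l). \<forall>i<d. \<forall>j<d.
      real (\<Sum>l<k. s l) * Y $$ (i, j) = (\<Sum>l<k. real (s l) * X l $$ (i, j))"
  for k :: nat and s :: "nat \<Rightarrow> nat"
proof (induction k)
  case 0
  then show ?case by simp
next
  case (Suc k)
  show ?case
  proof (cases "k = 0")
    case True
    then show ?thesis using Suc.prems by auto
  next
    case False
    then obtain Y where Y: "Y \<in> Uset d (\<Sum>l<k. s l)"
      "\<forall>i<d. \<forall>j<d. real (\<Sum>l<k. s l) * Y $$ (i, j) = (\<Sum>l<k. real (s l) * X l $$ (i, j))"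
      using Suc by auto
    have "0 < (\<Sum>l<k. s l)"
      using False Suc.prems(2) by (intro sum_pos) auto
    then obtain W where "W \<in> Uset d ((\<Sum>l<k. s l) + s k)" "\<forall>i<d. \<forall>j<d.
        real ((\<Sum>l<k. s l) + s k) * W $$ (i, j)
          = real (\<Sum>l<k. s l) * Y $$ (i, j) + real (s k) * X k $$ (i, j)"
      using Uset_add[OF _ _ Y(1), of "s k" "X k"] Suc.prems by auto
    then show ?thesis
      using Y(2) by (auto simp del: of_nat_add of_nat_sum)
  qed
qed

lemma wsum_sets_Uset_subset:
  assumes "0 < k" "\<forall>l<k. 0 < s l"
  shows "wsum_sets d k (\<lambda>l. real (s l) / real (\<Sum>m<k. s m)) (\<lambda>l. Uset d (s l))
    \<subseteq> Uset d (\<Sum>m<k. s m)"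
proof
  let ?S = "real (\<Sum>m<k. s m)"
  fix Z assume "Z \<in> wsum_sets d k (\<lambda>l. real (s l) / ?S) (\<lambda>l. Uset d (s l))"
  then obtain X where Z: "Z = mat d d (\<lambda>ij. \<Sum>l<k. real (s l) / ?S * X l $$ ij)"
    and X: "\<forall>l<k. X l \<in> Uset d (s l)"
    unfolding wsum_sets_def by blast
  obtain Y where Y: "Y \<in> Uset d (\<Sum>m<k. s m)"
    "\<forall>i<d. \<forall>j<d. ?S * Y $$ (i, j) = (\<Sum>l<k. real (s l) * X l $$ (i, j))"
    using Uset_sum[OF assms X] by blast
  have "0 < (\<Sum>m<k. s m)"
    using assms by (intro sum_pos) auto
  then have "?S \<noteq> 0" by (metis of_nat_0_less_iff less_irrefl)
  have "Z $$ (i, j) = Y $$ (i, j)" if "i < d" "j < d" for i j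
  proof -
    have "Z $$ (i, j) = (\<Sum>l<k. real (s l) * X l $$ (i, j)) / ?S"
      using that by (simp add: Z sum_divide_distrib del: of_nat_sum)
    also have "\<dots> = ?S * Y $$ (i, j) / ?S"
      using Y(2) that by simp
    also have "\<dots> = Y $$ (i, j)"
      using \<open>?S \<noteq> 0\<close> by (rule nonzero_mult_div_cancel_left)
    finally show ?thesis .
  qed
  then have "Z = Y"
    using Uset_carrier_mat[OF Y(1)] by (intro eq_matI) (auto simp: Z)
  with Y(1) show "Z \<in> Uset d (\<Sum>m<k. s m)" by simp
qed

lemma Uset_subset_Uset_mult:
  assumes "0 < s" "0 < n"
  shows "Uset d s \<subseteq> Uset d (n * s)"
proof
  fix X assume X: "X \<in> Uset d s"
  obtain Y where Y: "Y \<in> Uset d (n * s)"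
    "\<forall>i<d. \<forall>j<d. real (n * s) * Y $$ (i, j) = (\<Sum>l<n. real s * X $$ (i, j))"
    using Uset_sum[of n "\<lambda>_. s" "\<lambda>_. X" d] assms X by auto
  have "Y $$ (i, j) = X $$ (i, j)" if "i < d" "j < d" for i j
    using Y(2) that assms by simp
  then have "Y = X"
    using Uset_carrier_mat[OF X] Uset_carrier_mat[OF Y(1)] by (intro eq_matI) auto
  with Y(1) show "X \<in> Uset d (n * s)" by simp
qed

lemma Uset_inter_subset_Uset_add:
  assumes "0 < s" "0 < t"
  shows "Uset d s \<inter> Uset d t \<subseteq> Uset d (s + t)"
proof
  fix X assume X: "X \<in> Uset d s \<inter> Uset d t"
  obtain W where W: "W \<in> Uset d (s + t)"
    "\<forall>i<d. \<forall>j<d. real (s + t) * W $$ (i, j) = real s * X $$ (i, j) + real t * X $$ (i, j)"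
    using Uset_add[OF assms, of X d X] X by blast
  have "W $$ (i, j) = X $$ (i, j)" if "i < d" "j < d" for i j
    using W(2) that assms by (simp add: distrib_right[symmetric])
  then have "W = X"
    using X Uset_carrier_mat[OF W(1)] Uset_carrier_mat[of X d s] by (intro eq_matI) auto
  with W(1) show "X \<in> Uset d (s + t)" by simp
qed

text \<open>The argument works for every \<open>d\<close>.\<close>

theorem corollary2p7:
  fixes d :: nat
  assumes "d \<ge> 2"
  shows "(\<forall>k (s :: nat \<Rightarrow> nat). k \<ge> 1 \<longrightarrow> (\<forall>l<k. s l \<ge> 1) \<longrightarrow>
            wsum_sets d k (\<lambda>l. real (s l) / real (\<Sum>m<k. s m)) (\<lambda>l. Uset d (s l))
              \<subseteq> Uset d (\<Sum>m<k. s m))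
       \<and> (\<forall>s n :: nat. s \<ge> 1 \<longrightarrow> n \<ge> 1 \<longrightarrow> Uset d s \<subseteq> Uset d (n * s))
       \<and> (\<forall>s t :: nat. s \<ge> 1 \<longrightarrow> t \<ge> 1 \<longrightarrow> Uset d s \<inter> Uset d t \<subseteq> Uset d (s + t))"
  using wsum_sets_Uset_subset Uset_subset_Uset_mult Uset_inter_subset_Uset_add
  by (simp add: Suc_le_eq)

end
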